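(* The algebra $\mathcal{A}$ equals the algebra of (noncommutative) polynomials in $U$, $U^{-1}$, $P_{\ge0}$ and $P_0$.
   Context: Let $\{E_k\}_{k\in\mathbb{Z}}$ be the canonical basis of $\ell^2(\mathbb{Z})$, $UE_k=E_{k+1}$, $\mathbb{K}E_k=kE_k$, and $a(\mathbb{K})E_k=a(k)E_k$ for $a:\mathbb{Z}\to\mathbb{C}$. A function $a:\mathbb{Z}\to\mathbb{C}$ is eventually constant if there is $k_0$ such that $a$ is constant on $\{k\ge k_0\}$ and constant on $\{k\le-k_0\}$ (the two constants may differ). $\mathcal{A}$ is the set of finite sums $\sum_nU^na_n(\mathbb{K})$ with each $a_n$ eventually constant. $P_0$ is the orthogonal projection onto $\mathrm{span}\{E_0\}$ and $P_{\ge0}$ the orthogonal projection onto $\overline{\mathrm{span}}\{E_k:k\ge0\}$. *)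

theory Defs
  imports "HOL-Analysis.Analysis"
begin

type_synonym seq = "int \<Rightarrow> complex"
type_synonym op = "seq \<Rightarrow> seq"

text \<open>Vectors of l2(Z) are square-summable sequences; E_k is the indicator of k.\<close>
definition l2 :: "seq set" where
  "l2 = {f. (\<lambda>k. (cmod (f k))^2) summable_on UNIV}"

text \<open>U^n, n an integer: U E_k = E_(k+1), so (U^n f)(k) = f(k - n).\<close>
definition Upow :: "int \<Rightarrow> op" where
  "Upow n f = (\<lambda>k. f (k - n))"

definition multop :: "(int \<Rightarrow> complex) \<Rightarrow> op" where
  "multop a f = (\<lambda>k. a k * f k)"

definition P0 :: op where
  "P0 = multop (\<lambda>k. if k = 0 then 1 else 0)"

definition Pge0 :: op where
  "Pge0 = multop (\<lambda>k. if k \<ge> 0 then 1 else 0)"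

definition eventually_const :: "(int \<Rightarrow> complex) \<Rightarrow> bool" where
  "eventually_const a \<longleftrightarrow> (\<exists>k0. (\<forall>k l. k \<ge> k0 \<longrightarrow> l \<ge> k0 \<longrightarrow> a k = a l)
                                 \<and> (\<forall>k l. k \<le> -k0 \<longrightarrow> l \<le> -k0 \<longrightarrow> a k = a l))"

definition algA :: "op set" where
  "algA = {T. \<exists>N a. finite N \<and> (\<forall>n\<in>N. eventually_const (a n)) \<and>
              T = (\<lambda>f k. \<Sum>n\<in>N. Upow n (multop (a n) f) k)}"

inductive_set polyAlg :: "op set" where
  scalar: "(\<lambda>f. (\<lambda>k. c * f k)) \<in> polyAlg"
| genU: "Upow 1 \<in> polyAlg"
| genUinv: "Upow (-1) \<in> polyAlg"
| genPge0: "Pge0 \<in> polyAlg"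
| genP0: "P0 \<in> polyAlg"
| add: "S \<in> polyAlg \<Longrightarrow> T \<in> polyAlg \<Longrightarrow> (\<lambda>f k. S f k + T f k) \<in> polyAlg"
| mult: "S \<in> polyAlg \<Longrightarrow> T \<in> polyAlg \<Longrightarrow> S \<circ> T \<in> polyAlg"

definition on_l2 :: "op \<Rightarrow> op" where
  "on_l2 T = restrict T l2"

end

theory Submission
  imports Defs
begin

text \<open>
  Conjugation by powers of \<open>U\<close> shifts symbols, so \<open>U\<^sup>j P\<^sub>0 U\<^sup>-\<^sup>j\<close> and
  \<open>U\<^sup>j P\<^sub>\<ge>\<^sub>0 U\<^sup>-\<^sup>j\<close> are the multiplication operators by the indicators of \<open>{j}\<close>
  and \<open>[j, \<infinity>)\<close>. If \<open>a\<close> is constant on \<open>[K, \<infinity>)\<close> and on \<open>(-\<infinity>, -K]\<close>, then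
  \<open>a = a(-K) + \<Sum>\<^bsub>|j| < K\<^esub> (a(j) - a(-K)) \<chi>\<^bsub>{j}\<^esub> + (a(K) - a(-K)) \<chi>\<^bsub>[K, \<infinity>)\<^esub>\<close>,
  so every \<open>U\<^sup>n a(\<K>)\<close> is a polynomial in the generators. Conversely the generators lie
  in \<open>\<A>\<close>, which is closed under products because
  \<open>U\<^sup>m a(\<K>) U\<^sup>n b(\<K>) = U\<^sup>m\<^sup>+\<^sup>n a(\<K> + n) b(\<K>)\<close> and eventually constant symbols
  are stable under shifts and products. The equality holds already for the operators on
  all sequences, before restriction to \<open>\<ell>\<^sup>2\<close>.
\<close>

lemma Upow_multop_apply: "Upow n (multop a f) k = a (k - n) * f (k - n)"
  by (simp add: Upow_def multop_def)

lemma Upow_add: "Upow m \<circ> Upow n = Upow (m + n)"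
  by (simp add: fun_eq_iff Upow_def algebra_simps)

lemma algA_memE:
  assumes "T \<in> algA"
  obtains N a where "finite N" "\<forall>n\<in>N. eventually_const (a n)"
    and "T = (\<lambda>f k. \<Sum>n\<in>N. Upow n (multop (a n) f) k)"
  using assms unfolding algA_def by blast

lemma algA_memI:
  assumes "finite N" "\<And>n. n \<in> N \<Longrightarrow> eventually_const (a n)"
  shows "(\<lambda>f k. \<Sum>n\<in>N. Upow n (multop (a n) f) k) \<in> algA"
  using assms unfolding algA_def by blast

subsection \<open>Eventually constant symbols\<close>

lemma eventually_const_iff_eventually:
  "eventually_const a \<longleftrightarrow>
     (\<exists>c. \<forall>\<^sub>F k in at_top. a k = c) \<and> (\<exists>d. \<forall>\<^sub>F k in at_bot. a k = d)"
proof
  assume "eventually_const a"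
  then obtain k0 where top: "\<forall>k l. k \<ge> k0 \<longrightarrow> l \<ge> k0 \<longrightarrow> a k = a l"
    and bot: "\<forall>k l. k \<le> -k0 \<longrightarrow> l \<le> -k0 \<longrightarrow> a k = a l"
    unfolding eventually_const_def by blast
  have "\<forall>\<^sub>F k in at_top. a k = a k0"
    by (rule eventually_at_top_linorderI[of k0]) (use top in blast)
  moreover have "\<forall>\<^sub>F k in at_bot. a k = a (-k0)"
    by (rule eventually_at_bot_linorderI[of "-k0"]) (use bot in blast)
  ultimately show "(\<exists>c. \<forall>\<^sub>F k in at_top. a k = c) \<and> (\<exists>d. \<forall>\<^sub>F k in at_bot. a k = d)"
    by blast
next
  assume "(\<exists>c. \<forall>\<^sub>F k in at_top. a k = c) \<and> (\<exists>d. \<forall>\<^sub>F k in at_bot. a k = d)"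
  then obtain c d where "\<forall>\<^sub>F k in at_top. a k = c" "\<forall>\<^sub>F k in at_bot. a k = d"
    by blast
  then obtain N M where "\<And>k. k \<ge> N \<Longrightarrow> a k = c" "\<And>k. k \<le> M \<Longrightarrow> a k = d"
    unfolding eventually_at_top_linorder eventually_at_bot_linorder by blast
  then show "eventually_const a"
    unfolding eventually_const_def by (intro exI[of _ "max N (-M)"]) auto
qed

lemma eventually_const_const: "eventually_const (\<lambda>k. c)"
  unfolding eventually_const_iff_eventually by simp

lemma eventually_const_indicator_ge: "eventually_const (\<lambda>k. if k \<ge> j then c else 0)"
  unfolding eventually_const_iff_eventually
proof (intro conjI exI)
  show "\<forall>\<^sub>F k in at_top. (if k \<ge> j then c else 0) = c"
    using eventually_ge_at_top[of j] by eventually_elim simp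
  show "\<forall>\<^sub>F k in at_bot. (if k \<ge> j then c else 0) = 0"
    using eventually_le_at_bot[of "j - 1"] by eventually_elim simp
qed

lemma eventually_const_indicator_eq: "eventually_const (\<lambda>k. if k = j then c else 0)"
  unfolding eventually_const_iff_eventually
proof (intro conjI exI)
  show "\<forall>\<^sub>F k in at_top. (if k = j then c else 0) = 0"
    using eventually_at_top_not_equal[of j] by eventually_elim simp
  show "\<forall>\<^sub>F k in at_bot. (if k = j then c else 0) = 0"
    using eventually_at_bot_not_equal[of j] by eventually_elim simp
qed

lemma eventually_const_compose2:
  assumes "eventually_const a" "eventually_const b"
  shows "eventually_const (\<lambda>k. h (a k) (b k))"
proof -
  have compose: "\<forall>\<^sub>F k in F. h (a k) (b k) = h c d"
    if "\<forall>\<^sub>F k in F. a k = c" "\<forall>\<^sub>F k in F. b k = d" for F c d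
    using that by eventually_elim simp
  obtain c d where "\<forall>\<^sub>F k in at_top. a k = c" "\<forall>\<^sub>F k in at_bot. a k = d"
    using assms(1) unfolding eventually_const_iff_eventually by blast
  moreover obtain c' d' where "\<forall>\<^sub>F k in at_top. b k = c'" "\<forall>\<^sub>F k in at_bot. b k = d'"
    using assms(2) unfolding eventually_const_iff_eventually by blast
  ultimately show ?thesis
    unfolding eventually_const_iff_eventually using compose by blast
qed

lemma eventually_const_shift:
  assumes "eventually_const a"
  shows "eventually_const (\<lambda>k. a (k + n))"
proof -
  obtain c d where top: "\<forall>\<^sub>F k in at_top. a k = c" and bot: "\<forall>\<^sub>F k in at_bot. a k = d"
    using assms unfolding eventually_const_iff_eventually by blast
  have "filterlim (\<lambda>k::int. k + n) at_top at_top"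
    unfolding filterlim_at_top eventually_at_top_linorder by presburger
  moreover have "filterlim (\<lambda>k::int. k + n) at_bot at_bot"
    unfolding filterlim_at_bot eventually_at_bot_linorder by presburger
  ultimately show ?thesis
    unfolding eventually_const_iff_eventually
    using eventually_compose_filterlim[OF top] eventually_compose_filterlim[OF bot] by blast
qed

lemma eventually_const_sum:
  assumes "finite I" "\<And>i. i \<in> I \<Longrightarrow> eventually_const (a i)"
  shows "eventually_const (\<lambda>k. \<Sum>i\<in>I. a i k)"
  using assms
  by (induction I rule: finite_induct)
    (auto intro: eventually_const_compose2[where h = "(+)"] simp: eventually_const_const)

subsection \<open>Every \<open>U\<^sup>n a(\<K>)\<close> is a polynomial in the generators\<close>

lemma polyAlg_sum:
  assumes "finite I" "\<And>i. i \<in> I \<Longrightarrow> T i \<in> polyAlg"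
  shows "(\<lambda>f k. \<Sum>i\<in>I. T i f k) \<in> polyAlg"
  using assms
proof (induction I rule: finite_induct)
  case empty
  have "(\<lambda>f k. \<Sum>i\<in>{}. T i f k) = (\<lambda>f k. 0 * f k)"
    by simp
  then show ?case
    using polyAlg.scalar by metis
next
  case (insert i I)
  then show ?case
    using polyAlg.add[of "T i" "\<lambda>f k. \<Sum>i\<in>I. T i f k"] by simp
qed

lemma polyAlg_scale: "T \<in> polyAlg \<Longrightarrow> (\<lambda>f k. c * T f k) \<in> polyAlg"
  using polyAlg.mult[OF polyAlg.scalar, of T c] by (simp add: comp_def)

lemma Upow_in_polyAlg: "Upow n \<in> polyAlg"
proof (induction n rule: int_induct[where k = 0])
  case base
  have "Upow 0 = (\<lambda>f k. 1 * f k)"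
    by (simp add: fun_eq_iff Upow_def)
  then show ?case
    using polyAlg.scalar by metis
next
  case (step1 i)
  then show ?case
    using polyAlg.mult[OF polyAlg.genU] by (metis Upow_add add.commute)
next
  case (step2 i)
  then show ?case
    using polyAlg.mult[OF polyAlg.genUinv] by (metis Upow_add uminus_add_conv_diff)
qed

lemma multop_indicator_eq_in_polyAlg: "multop (\<lambda>k. if k = j then 1 else 0) \<in> polyAlg"
proof -
  have "multop (\<lambda>k. if k = j then 1 else 0) = Upow j \<circ> P0 \<circ> Upow (-j)"
    by (simp add: fun_eq_iff multop_def P0_def Upow_def)
  then show ?thesis
    using polyAlg.mult Upow_in_polyAlg polyAlg.genP0 by metis
qed

lemma multop_indicator_ge_in_polyAlg: "multop (\<lambda>k. if k \<ge> j then 1 else 0) \<in> polyAlg"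
proof -
  have "multop (\<lambda>k. if k \<ge> j then 1 else 0) = Upow j \<circ> Pge0 \<circ> Upow (-j)"
    by (simp add: fun_eq_iff multop_def Pge0_def Upow_def)
  then show ?thesis
    using polyAlg.mult Upow_in_polyAlg polyAlg.genPge0 by metis
qed

lemma eventually_const_decompose:
  fixes a :: "int \<Rightarrow> 'a::ring_1"
  assumes "\<forall>k l. k \<ge> K \<longrightarrow> l \<ge> K \<longrightarrow> a k = a l"
    and "\<forall>k l. k \<le> -K \<longrightarrow> l \<le> -K \<longrightarrow> a k = a l"
  shows "a k = a (-K) + (\<Sum>j\<in>{-K<..<K}. (a j - a (-K)) * (if k = j then 1 else 0))
                      + (a K - a (-K)) * (if k \<ge> K then 1 else 0)"
proof -
  have "(\<Sum>j\<in>{-K<..<K}. (a j - a (-K)) * (if k = j then 1 else 0)) =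
        (if k \<in> {-K<..<K} then a k - a (-K) else 0)"
    by (simp add: if_distrib sum.delta' cong: if_cong)
  moreover have "a k = a K" if "k \<ge> K"
    using assms(1) that by blast
  moreover have "a k = a (-K)" if "k \<le> -K"
    using assms(2) that by blast
  ultimately show ?thesis
    by (cases "k \<ge> K") auto
qed

lemma multop_in_polyAlg:
  assumes "eventually_const a"
  shows "multop a \<in> polyAlg"
proof -
  obtain K where top: "\<forall>k l. k \<ge> K \<longrightarrow> l \<ge> K \<longrightarrow> a k = a l"
    and bot: "\<forall>k l. k \<le> -K \<longrightarrow> l \<le> -K \<longrightarrow> a k = a l"
    using assms unfolding eventually_const_def by blast
  have "multop a = (\<lambda>f k. a (-K) * f k
      + ((\<Sum>j\<in>{-K<..<K}. (a j - a (-K)) * multop (\<lambda>k. if k = j then 1 else 0) f k)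
      + (a K - a (-K)) * multop (\<lambda>k. if k \<ge> K then 1 else 0) f k))" (is "_ = ?R")
  proof (intro ext)
    fix f k
    show "multop a f k = ?R f k"
      using eventually_const_decompose[OF top bot, of k]
      by (simp only: multop_def distrib_right sum_distrib_right mult.assoc add.assoc)
  qed
  also have "\<dots> \<in> polyAlg"
    by (intro polyAlg.add polyAlg.scalar polyAlg_sum polyAlg_scale finite_greaterThanLessThan_int
        multop_indicator_eq_in_polyAlg multop_indicator_ge_in_polyAlg)
  finally show ?thesis .
qed

lemma algA_subset_polyAlg: "algA \<subseteq> polyAlg"
proof
  fix T
  assume "T \<in> algA"
  then obtain N a where N: "finite N" "\<forall>n\<in>N. eventually_const (a n)"
    and T: "T = (\<lambda>f k. \<Sum>n\<in>N. Upow n (multop (a n) f) k)"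
    by (rule algA_memE)
  have "(\<lambda>f k. \<Sum>n\<in>N. (Upow n \<circ> multop (a n)) f k) \<in> polyAlg"
    by (intro polyAlg_sum polyAlg.mult Upow_in_polyAlg multop_in_polyAlg) (use N in auto)
  then show "T \<in> polyAlg"
    by (simp add: T)
qed

subsection \<open>The polynomials in the generators lie in \<open>\<A>\<close>\<close>

lemma sum_Upow_multop_in_algA:
  assumes "finite I" "\<And>i. i \<in> I \<Longrightarrow> eventually_const (a i)"
  shows "(\<lambda>f k. \<Sum>i\<in>I. Upow (n i) (multop (a i) f) k) \<in> algA"
proof -
  define b where "b p = (\<lambda>j. \<Sum>i\<in>{i\<in>I. n i = p}. a i j)" for p
  have "(\<Sum>i\<in>I. Upow (n i) (multop (a i) f) k) =
      (\<Sum>p\<in>n ` I. Upow p (multop (b p) f) k)" for f k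
  proof -
    have "(\<Sum>i\<in>I. Upow (n i) (multop (a i) f) k) =
        (\<Sum>p\<in>n ` I. \<Sum>i\<in>{i\<in>I. n i = p}. Upow (n i) (multop (a i) f) k)"
      using assms(1) by (rule sum.image_gen)
    also have "\<dots> = (\<Sum>p\<in>n ` I. Upow p (multop (b p) f) k)"
      by (intro sum.cong refl) (simp add: Upow_multop_apply b_def sum_distrib_right)
    finally show ?thesis .
  qed
  moreover have "(\<lambda>f k. \<Sum>p\<in>n ` I. Upow p (multop (b p) f) k) \<in> algA"
    using assms unfolding b_def by (intro algA_memI eventually_const_sum) auto
  ultimately show ?thesis
    by simp
qed

lemma Upow_multop_in_algA: "eventually_const a \<Longrightarrow> Upow n \<circ> multop a \<in> algA"
  using sum_Upow_multop_in_algA[of "{()}" "\<lambda>_. a" "\<lambda>_. n"] by (simp add: comp_def)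

lemma algA_add:
  assumes "S \<in> algA" "T \<in> algA"
  shows "(\<lambda>f k. S f k + T f k) \<in> algA"
proof -
  obtain M b where M: "finite M" "\<forall>m\<in>M. eventually_const (b m)"
    and S: "S = (\<lambda>f k. \<Sum>m\<in>M. Upow m (multop (b m) f) k)"
    using assms(1) by (rule algA_memE)
  obtain N a where N: "finite N" "\<forall>n\<in>N. eventually_const (a n)"
    and T: "T = (\<lambda>f k. \<Sum>n\<in>N. Upow n (multop (a n) f) k)"
    using assms(2) by (rule algA_memE)
  have "(\<lambda>f k. \<Sum>i\<in>M <+> N. Upow (case_sum id id i) (multop (case_sum b a i) f) k) \<in> algA"
    using M N by (intro sum_Upow_multop_in_algA) auto
  then show ?thesis
    using M N by (simp add: S T sum.Plus comp_def)
qed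

lemma algA_comp:
  assumes "S \<in> algA" "T \<in> algA"
  shows "S \<circ> T \<in> algA"
proof -
  obtain M b where M: "finite M" "\<forall>m\<in>M. eventually_const (b m)"
    and S: "S = (\<lambda>f k. \<Sum>m\<in>M. Upow m (multop (b m) f) k)"
    using assms(1) by (rule algA_memE)
  obtain N a where N: "finite N" "\<forall>n\<in>N. eventually_const (a n)"
    and T: "T = (\<lambda>f k. \<Sum>n\<in>N. Upow n (multop (a n) f) k)"
    using assms(2) by (rule algA_memE)
  let ?R = "\<lambda>f k. \<Sum>i\<in>M \<times> N.
      Upow (fst i + snd i) (multop (\<lambda>j. b (fst i) (j + snd i) * a (snd i) j) f) k"
  have "?R \<in> algA"
    using M N by (intro sum_Upow_multop_in_algA)
      (auto intro!: eventually_const_compose2[where h = "(*)"] eventually_const_shift)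
  moreover have "?R = S \<circ> T"
    by (simp add: fun_eq_iff S T Upow_multop_apply sum.cartesian_product'
        sum_distrib_left algebra_simps)
  ultimately show ?thesis
    by simp
qed

lemma polyAlg_subset_algA: "polyAlg \<subseteq> algA"
proof
  fix T
  assume "T \<in> polyAlg"
  then show "T \<in> algA"
  proof (induction rule: polyAlg.induct)
    case (scalar c)
    have "(\<lambda>f k. c * f k) = Upow 0 \<circ> multop (\<lambda>k. c)"
      by (simp add: fun_eq_iff Upow_multop_apply)
    then show ?case
      using Upow_multop_in_algA[OF eventually_const_const] by metis
  next
    case genU
    have "Upow 1 = Upow 1 \<circ> multop (\<lambda>k. 1)"
      by (simp add: fun_eq_iff Upow_def multop_def)
    then show ?case
      using Upow_multop_in_algA[OF eventually_const_const] by metis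
  next
    case genUinv
    have "Upow (-1) = Upow (-1) \<circ> multop (\<lambda>k. 1)"
      by (simp add: fun_eq_iff Upow_def multop_def)
    then show ?case
      using Upow_multop_in_algA[OF eventually_const_const] by metis
  next
    case genPge0
    have "Pge0 = Upow 0 \<circ> multop (\<lambda>k. if k \<ge> 0 then 1 else 0)"
      by (simp add: fun_eq_iff Upow_def Pge0_def multop_def)
    then show ?case
      using Upow_multop_in_algA[OF eventually_const_indicator_ge] by metis
  next
    case genP0
    have "P0 = Upow 0 \<circ> multop (\<lambda>k. if k = 0 then 1 else 0)"
      by (simp add: fun_eq_iff Upow_def P0_def multop_def)
    then show ?case
      using Upow_multop_in_algA[OF eventually_const_indicator_eq] by metis
  next
    case (add S T)
    then show ?case
      by (blast intro: algA_add)
  next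
    case (mult S T)
    then show ?case
      by (blast intro: algA_comp)
  qed
qed

lemma algA_eq_polyAlg: "algA = polyAlg"
  using algA_subset_polyAlg polyAlg_subset_algA by (rule subset_antisym)

theorem mainTheorem4:
  shows "on_l2 ` algA = on_l2 ` polyAlg"
  by (simp add: algA_eq_polyAlg)

end
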